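(* Let $X$ be a Banach space with a normalized $1$-unconditional basis $(e_i)_i$ not equivalent to the standard basis of $c_0$, let $q\le p$ in $[1,\infty]$, $q<\infty$, be such that $X$ satisfies lower $p$ and upper $q$ estimates on block sequences with constant one, and let $X_k=\mathrm{span}\{e_1,\dots,e_k\}$. Fix $d\in\mathbb{N}$ and $0<\varepsilon\le1$. Let $P\subseteq\mathbb{N}$ and $M=\{k_j\}_{j=1}^\infty\subseteq\mathbb{N}$ satisfy Assumption $A(d,\varepsilon/4)$. Then for all $\bar m\in[\{k_{2j}\}_{j=1}^\infty]^d$, all $k\in\{k_{2j}\}_{j=1}^\infty$ with $k>m_d$, and all step preserving maps $F\colon S^+_{\ell_\infty^k}\to S^+_{X_k}$ with $\omega_F(\tfrac1d)\le\tfrac\varepsilon8$, we have \[\Big\|F(z(\bar m))-\frac1{\psi(k)}\sum_{i=1}^ke_i\Big\|_X\le\varepsilon.\]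
   Context: Identify $X_k$ with $\mathbb{R}^k$ via $(e_i)$; $1_A=\sum_{i\in A}e_i$, $1_{(a,b]}=1_{\{i:a<i\le b\}}$. $S^+_{\ell_\infty^k}=\{x\in\mathbb{R}^k:\|x\|_\infty=1,x_i\ge0\}$, $S^+_{X_k}=\{\sum_{i\le k}a_ie_i:\|\cdot\|_X=1,a_i\ge0\}$. $\psi(k)=\|1_{[1,k]}\|_X$; $\psi_P(k)=\min\{\|1_{[1,k]\cap P}\|_X,\|1_{[1,k]\cap P^c}\|_X\}$. Lower $p$/upper $q$ estimates with constant one: $(\sum\|x_i\|^p)^{1/p}\le\|\sum x_i\|\le(\sum\|x_i\|^q)^{1/q}$ for every block sequence. Assumption $A(d,\varepsilon)$ for $P$ and $M=\{k_j\}$ ($k_1<k_2<\cdots$): (i) $\psi_P(k)\ge\frac12(\psi(k)-1)$ for all $k$; (ii) $(k_j,k_{j+1}]$ meets both $P$ and $P^c$ for all $j$; (iii) $\psi(k_{j+1})\ge(\frac{8d^{1/q-1/p}}{\varepsilon}+2)\psi(k_j)+1$. $[S]^d$ denotes increasing $d$-tuples from $S$; with $m_0=0$, $z(\bar m)=\sum_{s=1}^d(1-\frac{s-1}{d})1_{(m_{s-1},m_s]}$. $F=(F_i)$ is step preserving if $x_i=x_j$ implies $F_i(x)=F_j(x)$. $\omega_F(t)=\sup\{\|F(x)-F(y)\|_X:\|x-y\|_\infty\le t\}$. *)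

theory Defs
  imports "HOL-Analysis.Analysis"
begin

text \<open>The basis is e 1, e 2, ... (index 0 is unused). Vectors of R^k are
  coefficient functions nat => real vanishing outside {1..k}.\<close>

definition schauder_basis :: "(nat \<Rightarrow> 'a::banach) \<Rightarrow> bool" where
  "schauder_basis e \<longleftrightarrow>
     (\<forall>x. \<exists>!a. a 0 = 0 \<and> (\<lambda>i. a (Suc i) *\<^sub>R e (Suc i)) sums x)"

definition normalized_basis :: "(nat \<Rightarrow> 'a::real_normed_vector) \<Rightarrow> bool" where
  "normalized_basis e \<longleftrightarrow> (\<forall>i\<ge>1. norm (e i) = 1)"

definition one_unconditional :: "(nat \<Rightarrow> 'a::real_normed_vector) \<Rightarrow> bool" where
  "one_unconditional e \<longleftrightarrow>
     (\<forall>n (a::nat\<Rightarrow>real) (s::nat\<Rightarrow>real). (\<forall>i. s i \<in> {-1, 1}) \<longrightarrow>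
        norm (\<Sum>i=1..n. (s i * a i) *\<^sub>R e i) = norm (\<Sum>i=1..n. a i *\<^sub>R e i))"

definition equiv_c0_basis :: "(nat \<Rightarrow> 'a::real_normed_vector) \<Rightarrow> bool" where
  "equiv_c0_basis e \<longleftrightarrow> (\<exists>C>0. \<forall>n\<ge>1. \<forall>a::nat\<Rightarrow>real.
      (1/C) * (MAX i\<in>{1..n}. \<bar>a i\<bar>) \<le> norm (\<Sum>i=1..n. a i *\<^sub>R e i) \<and>
      norm (\<Sum>i=1..n. a i *\<^sub>R e i) \<le> C * (MAX i\<in>{1..n}. \<bar>a i\<bar>))"

definition block_seq :: "(nat \<Rightarrow> 'a::real_normed_vector) \<Rightarrow> nat \<Rightarrow> (nat \<Rightarrow> 'a) \<Rightarrow> bool" where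
  "block_seq e n x \<longleftrightarrow> (\<exists>b::nat\<Rightarrow>nat. mono b \<and>
      (\<forall>i<n. x i \<in> span (e ` {b i<..b (Suc i)})))"

definition lower_estimate :: "(nat \<Rightarrow> 'a::real_normed_vector) \<Rightarrow> ereal \<Rightarrow> bool" where
  "lower_estimate e p \<longleftrightarrow> (\<forall>n x. block_seq e n x \<longrightarrow>
      (if p = \<infinity> then (\<forall>i<n. norm (x i) \<le> norm (\<Sum>i<n. x i))
       else (\<Sum>i<n. norm (x i) powr real_of_ereal p) powr (1 / real_of_ereal p)
              \<le> norm (\<Sum>i<n. x i)))"

definition upper_estimate :: "(nat \<Rightarrow> 'a::real_normed_vector) \<Rightarrow> real \<Rightarrow> bool" where
  "upper_estimate e q \<longleftrightarrow> (\<forall>n x. block_seq e n x \<longrightarrow>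
      norm (\<Sum>i<n. x i) \<le> (\<Sum>i<n. norm (x i) powr q) powr (1 / q))"

definition inv_ereal_exp :: "ereal \<Rightarrow> real" where
  "inv_ereal_exp p = (if p = \<infinity> then 0 else 1 / real_of_ereal p)"

definition vec :: "(nat \<Rightarrow> 'a::real_normed_vector) \<Rightarrow> nat \<Rightarrow> (nat \<Rightarrow> real) \<Rightarrow> 'a" where
  "vec e k x = (\<Sum>i=1..k. x i *\<^sub>R e i)"

definition ind :: "nat set \<Rightarrow> nat \<Rightarrow> real" where
  "ind A = (\<lambda>i. if i \<in> A then 1 else 0)"

definition psi :: "(nat \<Rightarrow> 'a::real_normed_vector) \<Rightarrow> nat \<Rightarrow> real" where
  "psi e k = norm (\<Sum>i\<in>{1..k}. e i)"

definition psiP :: "(nat \<Rightarrow> 'a::real_normed_vector) \<Rightarrow> nat set \<Rightarrow> nat \<Rightarrow> real" where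
  "psiP e P k = min (norm (\<Sum>i\<in>{1..k} \<inter> P. e i)) (norm (\<Sum>i\<in>{1..k} - P. e i))"

text \<open>Assumption A(d,eps) for P and M = {kk j | j >= 1}, kk strictly increasing.\<close>
definition assumptionA ::
  "(nat \<Rightarrow> 'a::real_normed_vector) \<Rightarrow> ereal \<Rightarrow> real \<Rightarrow> nat \<Rightarrow> real \<Rightarrow> nat set \<Rightarrow> (nat \<Rightarrow> nat) \<Rightarrow> bool" where
  "assumptionA e p q d eps P kk \<longleftrightarrow>
     (\<forall>k. psiP e P k \<ge> (psi e k - 1) / 2) \<and>
     (\<forall>j\<ge>1. {kk j<..kk (Suc j)} \<inter> P \<noteq> {} \<and> {kk j<..kk (Suc j)} - P \<noteq> {}) \<and>
     (\<forall>j\<ge>1. psi e (kk (Suc j)) \<ge>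
         (8 * real d powr (1/q - inv_ereal_exp p) / eps + 2) * psi e (kk j) + 1)"

definition zvec :: "nat \<Rightarrow> (nat \<Rightarrow> nat) \<Rightarrow> nat \<Rightarrow> real" where
  "zvec d m = (\<lambda>i. \<Sum>s=1..d. (1 - (real s - 1) / real d) *
       ind {(if s = 1 then 0 else m (s - 1))<..m s} i)"

definition pos_sphere_linf :: "nat \<Rightarrow> (nat \<Rightarrow> real) set" where
  "pos_sphere_linf k = {x. (\<forall>i. i \<notin> {1..k} \<longrightarrow> x i = 0) \<and> (\<forall>i. x i \<ge> 0) \<and>
       (MAX i\<in>{1..k}. \<bar>x i\<bar>) = 1}"

definition pos_sphere_X :: "(nat \<Rightarrow> 'a::real_normed_vector) \<Rightarrow> nat \<Rightarrow> (nat \<Rightarrow> real) set" where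
  "pos_sphere_X e k = {a. (\<forall>i. i \<notin> {1..k} \<longrightarrow> a i = 0) \<and> (\<forall>i. a i \<ge> 0) \<and>
       norm (vec e k a) = 1}"

definition step_preserving :: "nat \<Rightarrow> ((nat \<Rightarrow> real) \<Rightarrow> (nat \<Rightarrow> real)) \<Rightarrow> bool" where
  "step_preserving k F \<longleftrightarrow> (\<forall>x\<in>pos_sphere_linf k. \<forall>i\<in>{1..k}. \<forall>j\<in>{1..k}.
       x i = x j \<longrightarrow> F x i = F x j)"

definition dist_inf :: "nat \<Rightarrow> (nat \<Rightarrow> real) \<Rightarrow> (nat \<Rightarrow> real) \<Rightarrow> real" where
  "dist_inf k x y = (MAX i\<in>{1..k}. \<bar>x i - y i\<bar>)"

definition modulus :: "(nat \<Rightarrow> 'a::real_normed_vector) \<Rightarrow> nat \<Rightarrow> ((nat \<Rightarrow> real) \<Rightarrow> (nat \<Rightarrow> real)) \<Rightarrow> real \<Rightarrow> real" where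
  "modulus e k F t = (SUP xy \<in> {(x, y). x \<in> pos_sphere_linf k \<and> y \<in> pos_sphere_linf k \<and>
       dist_inf k x y \<le> t}. norm (vec e k (F (fst xy)) - vec e k (F (snd xy))))"

end

theory Submission
  imports Defs
begin

text \<open>
  With m_0 = 0 and m_(d+1) = k, z(m) is the staircase taking the value 1 - s/d on the block
  (m_s, m_(s+1)], s = 0, ..., d. Fix Q = P or Q = the complement of P and raise z by 1/d on every
  block but the first outside Q: this moves F by at most omega_F(1/d) <= eps/8. The raised vector
  is constant on (m_s, m_(s+1)] \<inter> Q together with (m_(s+1), m_(s+2)] - Q, hence so is its image
  under F. Conditions (i) and (iii) of A(d, eps/4) make the second piece heavier than the first
  by the factor 16 d^(1/q - 1/p)/eps, so the upper q-estimate, the power mean inequality and the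
  lower p-estimate bound the restriction of that image to [1, m_d] \<inter> Q by eps/16. Therefore
  F(z(m)) has norm at most 3 eps/8 on [1, m_d], and it is constant on (m_d, k]; since psi(m_d) is
  negligible against psi(k), F(z(m)) is eps-close to the normalized indicator of [1, k].
\<close>

section \<open>Norm monotonicity for 1-unconditional bases\<close>

lemma one_unconditional_scale_coordinate:
  fixes e :: "nat \<Rightarrow> 'a::real_normed_vector"
  assumes unc: "one_unconditional e" and t: "\<bar>t\<bar> \<le> 1"
  shows "norm (\<Sum>i=1..n. (if i = j then t * c i else c i) *\<^sub>R e i) \<le> norm (\<Sum>i=1..n. c i *\<^sub>R e i)"
proof -
  define s where "s = (\<lambda>i::nat. if i = j then -1 else (1::real))"
  have flip: "norm (\<Sum>i=1..n. (s i * c i) *\<^sub>R e i) = norm (\<Sum>i=1..n. c i *\<^sub>R e i)"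
    using unc unfolding one_unconditional_def s_def by auto
  \<comment> \<open>Scaling one coordinate by t is the convex combination of the identity and the sign flip at j.\<close>
  have "(\<Sum>i=1..n. (if i = j then t * c i else c i) *\<^sub>R e i) =
     ((1+t)/2) *\<^sub>R (\<Sum>i=1..n. c i *\<^sub>R e i) + ((1-t)/2) *\<^sub>R (\<Sum>i=1..n. (s i * c i) *\<^sub>R e i)"
    unfolding scaleR_sum_right sum.distrib[symmetric]
    by (rule sum.cong) (auto simp: s_def scaleR_add_left[symmetric] field_simps)
  also have "norm \<dots> \<le> norm (((1+t)/2) *\<^sub>R (\<Sum>i=1..n. c i *\<^sub>R e i))
      + norm (((1-t)/2) *\<^sub>R (\<Sum>i=1..n. (s i * c i) *\<^sub>R e i))"
    by (rule norm_triangle_ineq)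
  also have "\<dots> = ((1+t)/2) * norm (\<Sum>i=1..n. c i *\<^sub>R e i) + ((1-t)/2) * norm (\<Sum>i=1..n. c i *\<^sub>R e i)"
    using t flip by (simp add: abs_le_iff)
  finally show ?thesis by (simp add: field_simps)
qed

lemma one_unconditional_scale_coordinates:
  fixes e :: "nat \<Rightarrow> 'a::real_normed_vector"
  assumes unc: "one_unconditional e" and "finite J" and t: "\<And>i. \<bar>t i\<bar> \<le> 1"
  shows "norm (\<Sum>i=1..n. (if i \<in> J then t i * c i else c i) *\<^sub>R e i) \<le> norm (\<Sum>i=1..n. c i *\<^sub>R e i)"
  using \<open>finite J\<close>
proof (induction J rule: finite_induct)
  case (insert j J)
  define c' where "c' = (\<lambda>i. if i \<in> J then t i * c i else c i)"
  have coeffs: "(if i \<in> insert j J then t i * c i else c i) = (if i = j then t j * c' i else c' i)" for i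
    using insert.hyps by (auto simp: c'_def)
  have "norm (\<Sum>i=1..n. (if i \<in> insert j J then t i * c i else c i) *\<^sub>R e i)
      = norm (\<Sum>i=1..n. (if i = j then t j * c' i else c' i) *\<^sub>R e i)"
    by (simp only: coeffs)
  also have "\<dots> \<le> norm (\<Sum>i=1..n. c' i *\<^sub>R e i)"
    by (rule one_unconditional_scale_coordinate[OF unc t])
  also have "\<dots> \<le> norm (\<Sum>i=1..n. c i *\<^sub>R e i)"
    using insert.IH by (simp add: c'_def)
  finally show ?case .
qed simp

lemma one_unconditional_norm_mono:
  fixes e :: "nat \<Rightarrow> 'a::real_normed_vector"
  assumes unc: "one_unconditional e" and ab: "\<And>i. i \<in> {1..n} \<Longrightarrow> \<bar>a i\<bar> \<le> \<bar>b i\<bar>"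
  shows "norm (\<Sum>i=1..n. a i *\<^sub>R e i) \<le> norm (\<Sum>i=1..n. b i *\<^sub>R e i)"
proof -
  define t where "t i = (if i \<in> {1..n} \<and> b i \<noteq> 0 then a i / b i else 0)" for i
  have t: "\<bar>t i\<bar> \<le> 1" for i
    using ab[of i] by (auto simp: t_def abs_divide divide_le_eq)
  have "a i = t i * b i" if "i \<in> {1..n}" for i
    using ab[OF that] that by (auto simp: t_def)
  then have "(\<Sum>i=1..n. a i *\<^sub>R e i) = (\<Sum>i=1..n. (if i \<in> {1..n} then t i * b i else b i) *\<^sub>R e i)"
    by (intro sum.cong) auto
  also have "norm \<dots> \<le> norm (\<Sum>i=1..n. b i *\<^sub>R e i)"
    by (rule one_unconditional_scale_coordinates[OF unc _ t]) simp
  finally show ?thesis .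
qed

lemma sum_subset_eq_indicator_sum:
  fixes e :: "nat \<Rightarrow> 'a::real_vector"
  assumes "B \<subseteq> {1..n}"
  shows "(\<Sum>i\<in>B. c i *\<^sub>R e i) = (\<Sum>i=1..n. (if i \<in> B then c i else 0) *\<^sub>R e i)"
proof -
  have "(\<Sum>i=1..n. (if i \<in> B then c i else 0) *\<^sub>R e i) = (\<Sum>i\<in>{1..n}. if i \<in> B then c i *\<^sub>R e i else 0)"
    by (rule sum.cong) auto
  also have "\<dots> = (\<Sum>i\<in>B. c i *\<^sub>R e i)"
    using assms by (simp add: sum.inter_restrict[symmetric] Int_absorb1)
  finally show ?thesis ..
qed

lemma one_unconditional_subset_norm_mono:
  fixes e :: "nat \<Rightarrow> 'a::real_normed_vector"
  assumes unc: "one_unconditional e" and "A \<subseteq> B" "B \<subseteq> {1..n}"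
    and c: "\<And>i. i \<in> A \<Longrightarrow> \<bar>c i\<bar> \<le> \<bar>c' i\<bar>"
  shows "norm (\<Sum>i\<in>A. c i *\<^sub>R e i) \<le> norm (\<Sum>i\<in>B. c' i *\<^sub>R e i)"
proof -
  have "norm (\<Sum>i=1..n. (if i \<in> A then c i else 0) *\<^sub>R e i)
      \<le> norm (\<Sum>i=1..n. (if i \<in> B then c' i else 0) *\<^sub>R e i)"
    using assms by (intro one_unconditional_norm_mono[OF unc]) auto
  then show ?thesis
    using assms by (simp only: sum_subset_eq_indicator_sum[of A n] sum_subset_eq_indicator_sum[of B n])
qed

lemma one_unconditional_subset_norm_mono':
  fixes e :: "nat \<Rightarrow> 'a::real_normed_vector"
  assumes "one_unconditional e" and "A \<subseteq> B" "B \<subseteq> {1..n}"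
  shows "norm (\<Sum>i\<in>A. e i) \<le> norm (\<Sum>i\<in>B. e i)"
  using one_unconditional_subset_norm_mono[OF assms, of "\<lambda>_. 1" "\<lambda>_. 1"] by simp

section \<open>Power means and the lower and upper estimates\<close>

lemma convex_on_powr_nonneg:
  assumes "r \<ge> 1"
  shows "convex_on {0..} (\<lambda>x::real. x powr r)"
proof (rule convex_on_linorderI)
  fix t x y :: real
  assume t: "0 < t" "t < 1" and x: "x \<in> {0..}" and y: "y \<in> {0..}" and "x < y"
  show "((1 - t) *\<^sub>R x + t *\<^sub>R y) powr r \<le> (1 - t) * x powr r + t * y powr r"
  proof (cases "x = 0")
    case True
    have "(t * y) powr r = t powr r * y powr r"
      using t y by (simp add: powr_mult)
    also have "\<dots> \<le> t * y powr r"
      using t assms powr_mono'[of 1 r t] by (intro mult_right_mono) auto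
    finally show ?thesis using True by simp
  next
    case False
    then show ?thesis
      using convex_onD[OF powr_convex[OF assms], of t x y] t x y \<open>x < y\<close> by simp
  qed
qed (simp add: convex_real_interval)

lemma power_mean_inequality:
  fixes y :: "'b \<Rightarrow> real"
  assumes S: "finite S" "S \<noteq> {}" and y: "\<And>s. s \<in> S \<Longrightarrow> y s \<ge> 0"
    and q: "1 \<le> q" and "q \<le> p"
  shows "(\<Sum>s\<in>S. y s powr q) powr (1/q)
           \<le> real (card S) powr (1/q - 1/p) * (\<Sum>s\<in>S. y s powr p) powr (1/p)"
proof -
  define n where "n = real (card S)"
  define r where "r = p / q"
  define Y where "Y s = y s powr q" for s
  have n: "n > 0" and r: "r \<ge> 1" and p: "p > 0"
    using S q \<open>q \<le> p\<close> by (auto simp: n_def r_def card_gt_0_iff)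
  have Yr: "Y s powr r = y s powr p" if "s \<in> S" for s
    using y[OF that] q by (simp add: Y_def powr_powr r_def)
  \<comment> \<open>Jensen's inequality for the convex function x powr (p/q) and the uniform weights 1/n.\<close>
  have "(\<Sum>s\<in>S. (1/n) *\<^sub>R Y s) powr r \<le> (\<Sum>s\<in>S. (1/n) * Y s powr r)"
    by (rule convex_on_sum[OF S convex_on_powr_nonneg[OF r]]) (use n in \<open>auto simp: n_def Y_def\<close>)
  then have "((\<Sum>s\<in>S. Y s) / n) powr r \<le> (\<Sum>s\<in>S. y s powr p) / n"
    using Yr by (simp add: sum_divide_distrib)
  then have "(\<Sum>s\<in>S. Y s) powr r \<le> n powr (r - 1) * (\<Sum>s\<in>S. y s powr p)"
    using n by (simp add: powr_divide powr_diff Y_def sum_nonneg divide_le_eq field_simps)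
  then have "((\<Sum>s\<in>S. Y s) powr r) powr (1/p) \<le> (n powr (r - 1) * (\<Sum>s\<in>S. y s powr p)) powr (1/p)"
    using p by (intro powr_mono2) (auto simp: Y_def sum_nonneg)
  moreover have "((\<Sum>s\<in>S. Y s) powr r) powr (1/p) = (\<Sum>s\<in>S. Y s) powr (1/q)"
    using p q by (simp add: powr_powr r_def)
  moreover have "(n powr (r - 1) * (\<Sum>s\<in>S. y s powr p)) powr (1/p)
      = n powr (1/q - 1/p) * (\<Sum>s\<in>S. y s powr p) powr (1/p)"
    using n p q by (simp add: powr_mult powr_powr sum_nonneg r_def field_simps)
  ultimately show ?thesis by (simp add: Y_def n_def)
qed

lemma sum_powr_root_scale:
  fixes y :: "'b \<Rightarrow> real"
  assumes "a \<ge> 0" and "\<And>i. i \<in> S \<Longrightarrow> y i \<ge> 0" and "q > 0"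
  shows "(\<Sum>i\<in>S. (a * y i) powr q) powr (1/q) = a * (\<Sum>i\<in>S. y i powr q) powr (1/q)"
proof -
  have "(\<Sum>i\<in>S. (a * y i) powr q) = a powr q * (\<Sum>i\<in>S. y i powr q)"
    using assms by (simp add: sum_distrib_left powr_mult)
  then show ?thesis
    using assms by (simp add: powr_mult sum_nonneg powr_powr)
qed

lemma sum_powr_root_mono:
  fixes x y :: "'b \<Rightarrow> real"
  assumes "\<And>i. i \<in> S \<Longrightarrow> 0 \<le> x i \<and> x i \<le> y i" and "q > 0"
  shows "(\<Sum>i\<in>S. x i powr q) powr (1/q) \<le> (\<Sum>i\<in>S. y i powr q) powr (1/q)"
  using assms by (intro powr_mono2 sum_mono sum_nonneg) auto

lemma inv_ereal_exp_le:
  assumes "1 \<le> q" and "ereal q \<le> p"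
  shows "inv_ereal_exp p \<le> 1/q"
  using assms by (cases p) (auto simp: inv_ereal_exp_def frac_le)

lemma lower_estimate_lq_bound:
  fixes e :: "nat \<Rightarrow> 'a::real_normed_vector"
  assumes low: "lower_estimate e p" and qp: "ereal q \<le> p" and q: "1 \<le> q"
    and bs: "block_seq e n x" and n: "n \<ge> 1" and x: "norm (\<Sum>i<n. x i) \<le> 1"
  shows "(\<Sum>i<n. norm (x i) powr q) powr (1/q) \<le> real n powr (1/q - inv_ereal_exp p)"
proof (cases p)
  case (real p')
  have "(\<Sum>i<n. norm (x i) powr p') powr (1/p') \<le> 1"
    using low bs x real unfolding lower_estimate_def by force
  moreover have "(\<Sum>i<n. norm (x i) powr q) powr (1/q)
      \<le> real (card {..<n}) powr (1/q - 1/p') * (\<Sum>i<n. norm (x i) powr p') powr (1/p')"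
    using n q qp real by (intro power_mean_inequality) (auto simp: lessThan_empty_iff)
  ultimately have "(\<Sum>i<n. norm (x i) powr q) powr (1/q) \<le> real n powr (1/q - 1/p')"
    using mult_left_le[of "(\<Sum>i<n. norm (x i) powr p') powr (1/p')" "real n powr (1/q - 1/p')"]
    by simp
  then show ?thesis
    using real by (simp add: inv_ereal_exp_def)
next
  case PInf
  then have "norm (x i) \<le> 1" if "i < n" for i
    using low bs x that unfolding lower_estimate_def by force
  then have "(\<Sum>i<n. norm (x i) powr q) \<le> real n"
    using sum_mono[of "{..<n}" "\<lambda>i. norm (x i) powr q" "\<lambda>_. 1"] q by (simp add: powr_le1)
  then show ?thesis
    using PInf q by (simp add: inv_ereal_exp_def powr_mono2 sum_nonneg)
next
  case MInf
  then show ?thesis using qp by simp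
qed

lemma block_seq_norm_comparison:
  fixes e :: "nat \<Rightarrow> 'a::real_normed_vector"
  assumes low: "lower_estimate e p" and up: "upper_estimate e q" and q: "1 \<le> q" "ereal q \<le> p"
    and x: "block_seq e n x" and y: "block_seq e n y" and n: "n \<ge> 1"
    and y1: "norm (\<Sum>i<n. y i) \<le> 1"
    and xy: "\<And>i. i < n \<Longrightarrow> norm (x i) \<le> \<rho> * norm (y i)" and "\<rho> \<ge> 0"
  shows "norm (\<Sum>i<n. x i) \<le> \<rho> * real n powr (1/q - inv_ereal_exp p)"
proof -
  have "norm (\<Sum>i<n. x i) \<le> (\<Sum>i<n. norm (x i) powr q) powr (1/q)"
    using up x unfolding upper_estimate_def by blast
  also have "\<dots> \<le> (\<Sum>i<n. (\<rho> * norm (y i)) powr q) powr (1/q)"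
    using xy q by (intro sum_powr_root_mono) auto
  also have "\<dots> = \<rho> * (\<Sum>i<n. norm (y i) powr q) powr (1/q)"
    using q \<open>\<rho> \<ge> 0\<close> by (intro sum_powr_root_scale) auto
  also have "\<dots> \<le> \<rho> * real n powr (1/q - inv_ereal_exp p)"
    using lower_estimate_lq_bound[OF low q(2,1) y n y1] \<open>\<rho> \<ge> 0\<close> by (rule mult_left_mono)
  finally show ?thesis .
qed

section \<open>The fundamental function\<close>

lemma psi_mono:
  assumes "one_unconditional e" and "a \<le> b"
  shows "psi e a \<le> psi e b"
  unfolding psi_def using assms by (intro one_unconditional_subset_norm_mono') auto

lemma psi_ge_one:
  assumes "normalized_basis e" and "one_unconditional e" and "1 \<le> a"
  shows "psi e a \<ge> 1"
  using psi_mono[OF assms(2,3)] assms(1) by (simp add: psi_def normalized_basis_def)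

lemma psi_growth_strict_mono:
  assumes unc: "one_unconditional e" and kk: "strict_mono kk" and "C \<ge> 0"
    and growth: "\<forall>j\<ge>1. psi e (kk (Suc j)) \<ge> C * psi e (kk j) + 1"
    and "1 \<le> i" "i < j"
  shows "psi e (kk j) \<ge> C * psi e (kk i) + 1"
proof -
  obtain j' where j': "j = Suc j'" "i \<le> j'"
    using \<open>i < j\<close> by (cases j) auto
  have "psi e (kk i) \<le> psi e (kk j')"
    using kk j'(2) by (intro psi_mono[OF unc]) (simp add: strict_mono_less_eq)
  then have "C * psi e (kk i) \<le> C * psi e (kk j')"
    using \<open>C \<ge> 0\<close> by (rule mult_left_mono)
  moreover have "C * psi e (kk j') + 1 \<le> psi e (kk (Suc j'))"
    using growth j'(2) \<open>1 \<le> i\<close> by simp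
  ultimately show ?thesis
    unfolding j'(1) by linarith
qed

lemma complement_block_dominates:
  fixes e :: "nat \<Rightarrow> 'a::real_normed_vector"
  assumes unc: "one_unconditional e"
    and half: "\<And>n. norm (\<Sum>i\<in>{1..n} - Q. e i) \<ge> (psi e n - 1) / 2"
    and "a \<le> b" "b \<le> c" and "\<rho> > 0" and growth: "psi e c \<ge> (2/\<rho> + 2) * psi e b + 1"
  shows "norm (\<Sum>i\<in>{a<..b} \<inter> Q. e i) \<le> \<rho> * norm (\<Sum>i\<in>{b<..c} - Q. e i)"
proof -
  have "(\<Sum>i\<in>{1..c} - Q. e i) = (\<Sum>i\<in>{b<..c} - Q. e i) + (\<Sum>i\<in>{1..b} - Q. e i)"
    using \<open>b \<le> c\<close> by (subst sum.union_disjoint[symmetric]) (auto intro: sum.cong)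
  then have "psi e c \<le> 2 * norm (\<Sum>i\<in>{b<..c} - Q. e i) + 2 * norm (\<Sum>i\<in>{1..b} - Q. e i) + 1"
    using half[of c] norm_triangle_ineq[of "\<Sum>i\<in>{b<..c} - Q. e i" "\<Sum>i\<in>{1..b} - Q. e i"] by simp
  moreover have "norm (\<Sum>i\<in>{1..b} - Q. e i) \<le> psi e b"
    unfolding psi_def by (rule one_unconditional_subset_norm_mono'[OF unc]) auto
  moreover have "2 * (psi e b / \<rho>) + 2 * psi e b + 1 \<le> psi e c"
    using growth by (simp add: distrib_right)
  ultimately have "psi e b / \<rho> \<le> norm (\<Sum>i\<in>{b<..c} - Q. e i)"
    by linarith
  moreover have "norm (\<Sum>i\<in>{a<..b} \<inter> Q. e i) \<le> psi e b"
    unfolding psi_def by (rule one_unconditional_subset_norm_mono'[OF unc]) auto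
  ultimately show ?thesis
    using \<open>\<rho> > 0\<close> by (simp add: divide_le_eq mult.commute)
qed

section \<open>Estimates for maps between positive spheres\<close>

lemma modulus_restriction_bound:
  fixes e :: "nat \<Rightarrow> 'a::real_normed_vector"
  assumes unc: "one_unconditional e" and F: "F ` pos_sphere_linf k \<subseteq> pos_sphere_X e k"
    and x: "x \<in> pos_sphere_linf k" and y: "y \<in> pos_sphere_linf k" and "dist_inf k x y \<le> t"
    and A: "A \<subseteq> {1..k}"
  shows "norm (\<Sum>l\<in>A. (F x l - F y l) *\<^sub>R e l) \<le> modulus e k F t"
proof -
  let ?S = "{(x, y). x \<in> pos_sphere_linf k \<and> y \<in> pos_sphere_linf k \<and> dist_inf k x y \<le> t}"
  let ?f = "\<lambda>xy. norm (vec e k (F (fst xy)) - vec e k (F (snd xy)))"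
  have unit: "norm (vec e k (F z)) = 1" if "z \<in> pos_sphere_linf k" for z
    using F that by (auto simp: pos_sphere_X_def)
  have "?f xy \<le> 2" if "xy \<in> ?S" for xy
    using that unit norm_triangle_ineq4[of "vec e k (F (fst xy))" "vec e k (F (snd xy))"] by auto
  then have "bdd_above (?f ` ?S)"
    by (rule bdd_aboveI2)
  then have "?f (x, y) \<le> (SUP xy\<in>?S. ?f xy)"
    using x y \<open>dist_inf k x y \<le> t\<close> by (intro cSUP_upper) auto
  moreover have "norm (\<Sum>l\<in>A. (F x l - F y l) *\<^sub>R e l) \<le> ?f (x, y)"
    using one_unconditional_subset_norm_mono[OF unc A order_refl, of "\<lambda>l. F x l - F y l" "\<lambda>l. F x l - F y l"]
    by (simp add: vec_def sum_subtractf scaleR_diff_left)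
  ultimately show ?thesis
    unfolding modulus_def by simp
qed

lemma norm_diff_normalized_sum_le:
  fixes Y R B :: "'a::real_normed_vector"
  assumes "c \<ge> 0" and "norm (Y + c *\<^sub>R B) = 1" and "norm (c *\<^sub>R B) \<le> 1" and "norm Y \<le> \<eta>"
    and "norm (R + B) > 0" and "norm B \<le> norm (R + B)"
  shows "norm ((Y + c *\<^sub>R B) - (1 / norm (R + B)) *\<^sub>R (R + B)) \<le> 2 * \<eta> + 2 * (norm R / norm (R + B))"
proof -
  define \<psi> where "\<psi> = norm (R + B)"
  have "1 - \<eta> \<le> c * norm B" "c * norm B \<le> 1"
    using assms norm_triangle_ineq[of Y "c *\<^sub>R B"] by auto
  moreover have "\<psi> > 0" "\<psi> \<le> norm R + norm B" "norm B \<le> \<psi>"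
    using assms norm_triangle_ineq[of R B] by (auto simp: \<psi>_def)
  then have "(\<psi> - norm R) / \<psi> \<le> norm B / \<psi>" "norm B / \<psi> \<le> 1"
    by (auto intro: divide_right_mono)
  moreover have "(\<psi> - norm R) / \<psi> = 1 - norm R / \<psi>"
    using \<open>\<psi> > 0\<close> by (simp add: diff_divide_distrib)
  moreover have "c * norm B - norm B / \<psi> = (c - 1/\<psi>) * norm B"
    by (simp add: algebra_simps)
  then have "norm ((c - 1/\<psi>) *\<^sub>R B) = \<bar>c * norm B - norm B / \<psi>\<bar>"
    by (simp add: abs_mult)
  ultimately have "norm ((c - 1/\<psi>) *\<^sub>R B) \<le> \<eta> + norm R / \<psi>"
    by (simp add: abs_le_iff)
  moreover have "norm ((1/\<psi>) *\<^sub>R R) = norm R / \<psi>"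
    using assms by (simp add: \<psi>_def)
  moreover have "(Y + c *\<^sub>R B) - (1/\<psi>) *\<^sub>R (R + B) = Y - (1/\<psi>) *\<^sub>R R + (c - 1/\<psi>) *\<^sub>R B"
    by (simp add: algebra_simps)
  ultimately show ?thesis
    using \<open>norm Y \<le> \<eta>\<close> norm_triangle_ineq[of "Y - (1/\<psi>) *\<^sub>R R"] norm_triangle_ineq4[of Y]
    unfolding \<psi>_def by (smt (verit))
qed

lemma constant_tail_estimate:
  fixes e :: "nat \<Rightarrow> 'a::real_normed_vector"
  assumes unc: "one_unconditional e" and G: "G \<in> pos_sphere_X e k" and "a < k" and "psi e k > 0"
    and tail: "\<And>l. l \<in> {a<..k} \<Longrightarrow> G l = G k"
    and head: "norm (\<Sum>l\<in>{1..a}. G l *\<^sub>R e l) \<le> \<eta>"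
  shows "norm (vec e k G - (1 / psi e k) *\<^sub>R (\<Sum>i=1..k. e i)) \<le> 2 * \<eta> + 2 * (psi e a / psi e k)"
proof -
  define R B where "R = (\<Sum>i\<in>{1..a}. e i)" and "B = (\<Sum>i\<in>{a<..k}. e i)"
  have split: "{1..k} = {1..a} \<union> {a<..k}" "{1..a} \<inter> {a<..k} = {}"
    using \<open>a < k\<close> by auto
  have "G l *\<^sub>R e l = G k *\<^sub>R e l" if "l \<in> {a<..k}" for l
    using tail[OF that] by simp
  then have tail_sum: "(\<Sum>l\<in>{a<..k}. G l *\<^sub>R e l) = G k *\<^sub>R B"
    unfolding B_def scaleR_sum_right by (rule sum.cong[OF refl])
  have vec_split: "vec e k G = (\<Sum>l\<in>{1..a}. G l *\<^sub>R e l) + G k *\<^sub>R B"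
    unfolding vec_def split(1) tail_sum[symmetric] using split(2) by (simp add: sum.union_disjoint)
  have sum_split: "(\<Sum>i=1..k. e i) = R + B"
    unfolding R_def B_def split(1) using split(2) by (simp add: sum.union_disjoint)
  have psi_k: "psi e k = norm (R + B)" and psi_a: "psi e a = norm R"
    by (simp_all only: psi_def sum_split R_def)
  have "norm (G k *\<^sub>R B) \<le> norm (vec e k G)"
    unfolding tail_sum[symmetric] vec_def
    by (rule one_unconditional_subset_norm_mono[OF unc]) auto
  moreover have "norm B \<le> norm (\<Sum>i=1..k. e i)"
    unfolding B_def by (rule one_unconditional_subset_norm_mono'[OF unc]) auto
  moreover have "G k \<ge> 0" "norm (vec e k G) = 1"
    using G by (auto simp: pos_sphere_X_def)
  ultimately show ?thesis
    unfolding vec_split sum_split psi_k psi_a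
    using \<open>psi e k > 0\<close> head psi_k by (intro norm_diff_normalized_sum_le) simp_all
qed

lemma sum_over_blocks:
  fixes mm :: "nat \<Rightarrow> nat"
  assumes "mono mm" and "a \<le> b"
  shows "(\<Sum>s\<in>{a..<b}. \<Sum>l\<in>{mm s<..mm (Suc s)} \<inter> A. f l) = (\<Sum>l\<in>{mm a<..mm b} \<inter> A. f l)"
  using \<open>a \<le> b\<close>
proof (induction b rule: nat_induct_at_least)
  case (Suc b)
  have "{mm a<..mm (Suc b)} \<inter> A = ({mm a<..mm b} \<inter> A) \<union> ({mm b<..mm (Suc b)} \<inter> A)"
    using monoD[OF \<open>mono mm\<close>, of a b] monoD[OF \<open>mono mm\<close>, of b "Suc b"] Suc.hyps by auto
  then have "(\<Sum>l\<in>{mm a<..mm (Suc b)} \<inter> A. f l)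
      = (\<Sum>l\<in>{mm a<..mm b} \<inter> A. f l) + (\<Sum>l\<in>{mm b<..mm (Suc b)} \<inter> A. f l)"
    by (simp add: sum.union_disjoint disjoint_iff)
  then show ?case
    using Suc by simp
qed simp

lemma pos_sphere_linfI:
  assumes "1 \<le> k" and "\<And>i. i \<notin> {1..k} \<Longrightarrow> x i = 0"
    and "\<And>i. 0 \<le> x i \<and> x i \<le> 1" and "x 1 = 1"
  shows "x \<in> pos_sphere_linf k"
proof -
  have "(MAX i\<in>{1..k}. \<bar>x i\<bar>) = 1"
  proof (rule Max_eqI)
    show "1 \<in> (\<lambda>i. \<bar>x i\<bar>) ` {1..k}"
      using assms(1,4) by force
  qed (use assms(3) in auto)
  then show ?thesis
    using assms unfolding pos_sphere_linf_def by auto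
qed

section \<open>Staircase vectors\<close>

text \<open>mm s is the paper's m_s for 1 \<le> s \<le> d, extended by mm 0 = 0 and mm (Suc d) = k; block s
  is (mm s, mm (Suc s)], on which z(m) equals height s.\<close>
locale staircase =
  fixes mm :: "nat \<Rightarrow> nat" and d :: nat
  assumes mono_mm: "mono mm" and mm_0: "mm 0 = 0" and mm_1: "0 < mm 1" and d_pos: "1 \<le> d"
begin

definition level :: "nat \<Rightarrow> nat" where
  "level i = (LEAST s. i \<le> mm (Suc s))"

lemma level_eqI:
  assumes "i \<in> {mm s<..mm (Suc s)}"
  shows "level i = s"
  unfolding level_def
proof (rule Least_equality)
  show "i \<le> mm (Suc s)"
    using assms by simp
  fix t
  assume "i \<le> mm (Suc t)"
  then show "s \<le> t"
    using assms monoD[OF mono_mm, of "Suc t" s] by (cases "s \<le> t") auto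
qed

lemma level_mem:
  assumes "i \<in> {1..mm (Suc d)}"
  shows "level i \<le> d" and "i \<in> {mm (level i)<..mm (Suc (level i))}"
proof -
  have i: "i \<le> mm (Suc d)"
    using assms by simp
  show "level i \<le> d"
    unfolding level_def by (rule Least_le) (rule i)
  have "i \<le> mm (Suc (level i))"
    unfolding level_def by (rule LeastI[of _ d]) (rule i)
  moreover have "mm (level i) < i"
  proof (cases "level i")
    case 0
    then show ?thesis using assms mm_0 by simp
  next
    case (Suc t)
    then have "\<not> i \<le> mm (Suc t)"
      using not_less_Least[of t "\<lambda>s. i \<le> mm (Suc s)"] by (simp add: level_def)
    then show ?thesis using Suc by simp
  qed
  ultimately show "i \<in> {mm (level i)<..mm (Suc (level i))}"
    by simp
qed

lemma mem_block_iff: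
  assumes "s \<le> d"
  shows "i \<in> {mm s<..mm (Suc s)} \<longleftrightarrow> i \<in> {1..mm (Suc d)} \<and> level i = s"
proof
  assume i: "i \<in> {mm s<..mm (Suc s)}"
  moreover have "mm (Suc s) \<le> mm (Suc d)"
    using assms by (intro monoD[OF mono_mm]) simp
  ultimately show "i \<in> {1..mm (Suc d)} \<and> level i = s"
    using level_eqI[OF i] by auto
qed (use level_mem in blast)

definition height :: "nat \<Rightarrow> real" where
  "height s = 1 - real s / real d"

definition stair :: "nat \<Rightarrow> real" where
  "stair i = (if i \<in> {1..mm (Suc d)} then height (level i) else 0)"

text \<open>Outside Q every block but the first gets the height of the previous block; on block 0 the
  truncated subtraction leaves the height unchanged.\<close>
definition shifted_stair :: "nat set \<Rightarrow> nat \<Rightarrow> real" where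
  "shifted_stair Q i =
     (if i \<in> {1..mm (Suc d)} then height (if i \<in> Q then level i else level i - 1) else 0)"

definition interlaced :: "nat set \<Rightarrow> nat \<Rightarrow> nat set" where
  "interlaced Q s = ({mm s<..mm (Suc s)} \<inter> Q) \<union> ({mm (Suc s)<..mm (Suc (Suc s))} - Q)"

lemma height_range: "s \<le> d \<Longrightarrow> 0 \<le> height s \<and> height s \<le> 1"
  using d_pos by (simp add: height_def)

lemma level_one: "level 1 = 0"
  using mm_0 mm_1 by (intro level_eqI) simp

lemma one_le_top: "1 \<le> mm (Suc d)"
  using mm_1 monoD[OF mono_mm, of 1 "Suc d"] by simp

lemma stair_in_sphere: "stair \<in> pos_sphere_linf (mm (Suc d))"
proof (rule pos_sphere_linfI[OF one_le_top])
  show "0 \<le> stair i \<and> stair i \<le> 1" for i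
    using height_range level_mem(1)[of i] by (simp add: stair_def)
  show "stair 1 = 1"
    using one_le_top level_one by (simp add: stair_def height_def)
qed (auto simp: stair_def)

lemma shifted_stair_in_sphere: "shifted_stair Q \<in> pos_sphere_linf (mm (Suc d))"
proof (rule pos_sphere_linfI[OF one_le_top])
  show "0 \<le> shifted_stair Q i \<and> shifted_stair Q i \<le> 1" for i
  proof (cases "i \<in> {1..mm (Suc d)}")
    case True
    then have "level i \<le> d" "level i - 1 \<le> d"
      using level_mem(1)[OF True] by auto
    then show ?thesis
      using True height_range by (simp add: shifted_stair_def)
  qed (auto simp: shifted_stair_def)
  show "shifted_stair Q 1 = 1"
    using one_le_top level_one by (simp add: shifted_stair_def height_def)
qed (auto simp: shifted_stair_def)

lemma dist_stair_shifted_stair: "dist_inf (mm (Suc d)) stair (shifted_stair Q) \<le> 1 / real d"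
proof -
  have "\<bar>stair i - shifted_stair Q i\<bar> \<le> 1 / real d" for i
  proof (cases "i \<in> {1..mm (Suc d)} \<and> i \<notin> Q \<and> level i \<noteq> 0")
    case True
    then have "stair i - shifted_stair Q i = - (1 / real d)"
      using d_pos by (simp add: stair_def shifted_stair_def height_def field_simps of_nat_diff)
    then show ?thesis
      by simp
  qed (auto simp: stair_def shifted_stair_def)
  then show ?thesis
    unfolding dist_inf_def using one_le_top by (subst Max_le_iff) auto
qed

lemma stair_on_block:
  assumes "s \<le> d" and "i \<in> {mm s<..mm (Suc s)}"
  shows "stair i = height s"
  using assms mem_block_iff[of s i] by (simp add: stair_def)

lemma shifted_stair_on_interlaced:
  assumes "s < d" and "i \<in> interlaced Q s"
  shows "i \<in> {1..mm (Suc d)}" and "shifted_stair Q i = height s"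
  using assms mem_block_iff[of s i] mem_block_iff[of "Suc s" i]
  by (auto simp: interlaced_def shifted_stair_def)

lemma zvec_eq_stair:
  assumes m: "\<And>s. s \<in> {1..d} \<Longrightarrow> m s = mm s"
  shows "zvec d m = stair"
proof
  fix i
  have "zvec d m i
      = (\<Sum>s<d. (1 - (real (Suc s) - 1) / real d) * ind {(if Suc s = 1 then 0 else m (Suc s - 1))<..m (Suc s)} i)"
    by (simp only: zvec_def One_nat_def sum.atLeast1_atMost_eq)
  also have "\<dots> = (\<Sum>s<d. height s * ind {mm s<..mm (Suc s)} i)"
    using m mm_0 by (intro sum.cong refl) (auto simp: height_def)
  also have "\<dots> = (\<Sum>s<d. if s = level i \<and> i \<in> {1..mm (Suc d)} then height s else 0)"
  proof (intro sum.cong refl)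
    fix s
    assume "s \<in> {..<d}"
    then have "i \<in> {mm s<..mm (Suc s)} \<longleftrightarrow> i \<in> {1..mm (Suc d)} \<and> level i = s"
      by (intro mem_block_iff) simp
    then show "height s * ind {mm s<..mm (Suc s)} i
        = (if s = level i \<and> i \<in> {1..mm (Suc d)} then height s else 0)"
      unfolding ind_def by auto
  qed
  also have "\<dots> = stair i"
    using level_mem(1)[of i] d_pos by (auto simp: stair_def height_def)
  finally show "zvec d m i = stair i" .
qed

lemma interlaced_restriction_bound:
  fixes e :: "nat \<Rightarrow> 'a::real_normed_vector"
  assumes unc: "one_unconditional e" and low: "lower_estimate e p" and up: "upper_estimate e q"
    and q: "1 \<le> q" "ereal q \<le> p"
    and W: "norm (vec e (mm (Suc d)) W) \<le> 1"
    and const: "\<And>s l. s < d \<Longrightarrow> l \<in> interlaced Q s \<Longrightarrow> W l = c s"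
    and ratio: "\<And>s. s < d \<Longrightarrow> norm (\<Sum>i\<in>{mm s<..mm (Suc s)} \<inter> Q. e i)
                  \<le> \<rho> * norm (\<Sum>i\<in>{mm (Suc s)<..mm (Suc (Suc s))} - Q. e i)"
    and "\<rho> \<ge> 0"
  shows "norm (\<Sum>l\<in>{1..mm d} \<inter> Q. W l *\<^sub>R e l) \<le> \<rho> * real d powr (1/q - inv_ereal_exp p)"
proof -
  define x where "x s = c s *\<^sub>R (\<Sum>i\<in>{mm s<..mm (Suc s)} \<inter> Q. e i)" for s
  define y where "y s = c s *\<^sub>R (\<Sum>i\<in>{mm (Suc s)<..mm (Suc (Suc s))} - Q. e i)" for s
  have x_eq: "x s = (\<Sum>l\<in>{mm s<..mm (Suc s)} \<inter> Q. W l *\<^sub>R e l)" if "s < d" for s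
    using const[OF that] by (simp add: x_def scaleR_sum_right interlaced_def)
  have y_eq: "y s = (\<Sum>l\<in>{mm (Suc s)<..mm (Suc (Suc s))} \<inter> - Q. W l *\<^sub>R e l)" if "s < d" for s
    using const[OF that] by (simp add: y_def scaleR_sum_right interlaced_def Diff_eq)
  have "(\<Sum>s<d. x s) = (\<Sum>l\<in>{mm 0<..mm d} \<inter> Q. W l *\<^sub>R e l)"
    using sum_over_blocks[OF mono_mm, where a = 0 and b = d and A = Q] x_eq by (simp add: atLeast0LessThan)
  also have "{mm 0<..mm d} = {1..mm d}"
    using mm_0 by auto
  finally have sum_x: "(\<Sum>s<d. x s) = (\<Sum>l\<in>{1..mm d} \<inter> Q. W l *\<^sub>R e l)" .
  have mono_Suc: "mono (\<lambda>s. mm (Suc s))"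
    using mono_mm by (simp add: mono_def)
  have "(\<Sum>s<d. y s) = (\<Sum>l\<in>{mm 1<..mm (Suc d)} \<inter> - Q. W l *\<^sub>R e l)"
    using sum_over_blocks[OF mono_Suc, where a = 0 and b = d and A = "- Q"] y_eq by (simp add: atLeast0LessThan)
  then have "norm (\<Sum>s<d. y s) \<le> norm (vec e (mm (Suc d)) W)"
    unfolding vec_def by (auto intro!: one_unconditional_subset_norm_mono[OF unc])
  then have sum_y: "norm (\<Sum>s<d. y s) \<le> 1"
    using W by linarith
  have "block_seq e d x"
    unfolding block_seq_def x_def
    by (intro exI[of _ mm] conjI mono_mm allI impI span_scale span_sum span_base) auto
  moreover have "block_seq e d y"
    unfolding block_seq_def y_def
    by (intro exI[of _ "\<lambda>s. mm (Suc s)"] conjI mono_Suc allI impI span_scale span_sum span_base) auto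
  moreover have "norm (x s) \<le> \<rho> * norm (y s)" if "s < d" for s
    using mult_left_mono[OF ratio[OF that] abs_ge_zero[of "c s"]] by (simp add: x_def y_def mult_ac)
  ultimately have "norm (\<Sum>s<d. x s) \<le> \<rho> * real d powr (1/q - inv_ereal_exp p)"
    using block_seq_norm_comparison[OF low up q] sum_y d_pos \<open>\<rho> \<ge> 0\<close> by blast
  then show ?thesis
    unfolding sum_x .
qed

lemma step_map_restriction_bound:
  fixes e :: "nat \<Rightarrow> 'a::real_normed_vector"
  assumes unc: "one_unconditional e" and low: "lower_estimate e p" and up: "upper_estimate e q"
    and q: "1 \<le> q" "ereal q \<le> p"
    and F: "F ` pos_sphere_linf (mm (Suc d)) \<subseteq> pos_sphere_X e (mm (Suc d))"
    and step: "step_preserving (mm (Suc d)) F"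
    and ratio: "\<And>s. s < d \<Longrightarrow> norm (\<Sum>i\<in>{mm s<..mm (Suc s)} \<inter> Q. e i)
                  \<le> \<rho> * norm (\<Sum>i\<in>{mm (Suc s)<..mm (Suc (Suc s))} - Q. e i)"
    and "\<rho> \<ge> 0"
  shows "norm (\<Sum>l\<in>{1..mm d} \<inter> Q. F stair l *\<^sub>R e l)
           \<le> modulus e (mm (Suc d)) F (1 / real d) + \<rho> * real d powr (1/q - inv_ereal_exp p)"
proof -
  define W where "W = F (shifted_stair Q)"
  define c where "c s = W (SOME l. l \<in> interlaced Q s)" for s
  have const: "W l = c s" if "s < d" "l \<in> interlaced Q s" for s l
  proof -
    have "(SOME l. l \<in> interlaced Q s) \<in> interlaced Q s"
      using that(2) by (rule someI)
    then show ?thesis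
      using step shifted_stair_in_sphere shifted_stair_on_interlaced[OF that(1)] that(2)
      unfolding step_preserving_def W_def c_def by metis
  qed
  have "norm (vec e (mm (Suc d)) W) = 1"
    using F shifted_stair_in_sphere by (auto simp: W_def pos_sphere_X_def)
  then have W_part: "norm (\<Sum>l\<in>{1..mm d} \<inter> Q. W l *\<^sub>R e l) \<le> \<rho> * real d powr (1/q - inv_ereal_exp p)"
    using const ratio \<open>\<rho> \<ge> 0\<close> by (intro interlaced_restriction_bound[OF unc low up q]) auto
  have "mm d \<le> mm (Suc d)"
    by (rule monoD[OF mono_mm]) simp
  then have diff_part: "norm (\<Sum>l\<in>{1..mm d} \<inter> Q. (F stair l - W l) *\<^sub>R e l) \<le> modulus e (mm (Suc d)) F (1 / real d)"
    unfolding W_def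
    by (intro modulus_restriction_bound[OF unc F stair_in_sphere shifted_stair_in_sphere dist_stair_shifted_stair]) auto
  have split: "(\<Sum>l\<in>{1..mm d} \<inter> Q. F stair l *\<^sub>R e l)
      = (\<Sum>l\<in>{1..mm d} \<inter> Q. (F stair l - W l) *\<^sub>R e l) + (\<Sum>l\<in>{1..mm d} \<inter> Q. W l *\<^sub>R e l)"
    by (simp add: sum.distrib[symmetric] scaleR_add_left[symmetric])
  show ?thesis
    unfolding split using norm_triangle_ineq diff_part W_part by (rule order_trans[OF _ add_mono])
qed

lemma step_map_head_bound:
  fixes e :: "nat \<Rightarrow> 'a::real_normed_vector"
  assumes unc: "one_unconditional e" and low: "lower_estimate e p" and up: "upper_estimate e q"
    and q: "1 \<le> q" "ereal q \<le> p"
    and F: "F ` pos_sphere_linf (mm (Suc d)) \<subseteq> pos_sphere_X e (mm (Suc d))"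
    and step: "step_preserving (mm (Suc d)) F"
    and half: "\<And>n. psiP e P n \<ge> (psi e n - 1) / 2"
    and growth: "\<And>s. s \<in> {1..d} \<Longrightarrow> psi e (mm (Suc s)) \<ge> (2/\<rho> + 2) * psi e (mm s) + 1"
    and "\<rho> > 0"
  shows "norm (\<Sum>l\<in>{1..mm d}. F stair l *\<^sub>R e l)
           \<le> 2 * (modulus e (mm (Suc d)) F (1 / real d) + \<rho> * real d powr (1/q - inv_ereal_exp p))"
proof -
  have part: "norm (\<Sum>l\<in>{1..mm d} \<inter> Q. F stair l *\<^sub>R e l)
      \<le> modulus e (mm (Suc d)) F (1 / real d) + \<rho> * real d powr (1/q - inv_ereal_exp p)"
    if half_Q: "\<And>n. norm (\<Sum>i\<in>{1..n} - Q. e i) \<ge> (psi e n - 1) / 2" for Q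
  proof (rule step_map_restriction_bound[OF unc low up q F step])
    fix s
    assume "s < d"
    then show "norm (\<Sum>i\<in>{mm s<..mm (Suc s)} \<inter> Q. e i)
        \<le> \<rho> * norm (\<Sum>i\<in>{mm (Suc s)<..mm (Suc (Suc s))} - Q. e i)"
      using growth[of "Suc s"] \<open>\<rho> > 0\<close>
      by (intro complement_block_dominates[OF unc half_Q] monoD[OF mono_mm]) auto
  qed (use \<open>\<rho> > 0\<close> in simp)
  have half_P: "norm (\<Sum>i\<in>{1..n} - P. e i) \<ge> (psi e n - 1) / 2" for n
    using half[of n] by (simp add: psiP_def)
  have half_compl: "norm (\<Sum>i\<in>{1..n} - - P. e i) \<ge> (psi e n - 1) / 2" for n
    using half[of n] by (simp add: psiP_def Diff_eq)
  have "(\<Sum>l\<in>{1..mm d}. F stair l *\<^sub>R e l)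
      = (\<Sum>l\<in>{1..mm d} \<inter> P. F stair l *\<^sub>R e l) + (\<Sum>l\<in>{1..mm d} \<inter> - P. F stair l *\<^sub>R e l)"
    using sum.Int_Diff[of "{1..mm d}" "\<lambda>l. F stair l *\<^sub>R e l" P] by (simp add: Diff_eq)
  then show ?thesis
    using part[OF half_P] part[OF half_compl]
      norm_triangle_ineq[of "\<Sum>l\<in>{1..mm d} \<inter> P. F stair l *\<^sub>R e l"
        "\<Sum>l\<in>{1..mm d} \<inter> - P. F stair l *\<^sub>R e l"]
    by simp
qed

lemma stair_image_estimate:
  fixes e :: "nat \<Rightarrow> 'a::real_normed_vector"
  assumes unc: "one_unconditional e" and normalized: "normalized_basis e"
    and low: "lower_estimate e p" and up: "upper_estimate e q" and q: "1 \<le> q" "ereal q \<le> p"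
    and F: "F ` pos_sphere_linf (mm (Suc d)) \<subseteq> pos_sphere_X e (mm (Suc d))"
    and step: "step_preserving (mm (Suc d)) F"
    and half: "\<And>n. psiP e P n \<ge> (psi e n - 1) / 2"
    and growth: "\<And>s. s \<in> {1..d} \<Longrightarrow> psi e (mm (Suc s)) \<ge> (2/\<rho> + 2) * psi e (mm s) + 1"
    and "\<rho> > 0" and last_block: "mm d < mm (Suc d)"
  shows "norm (vec e (mm (Suc d)) (F stair) - (1 / psi e (mm (Suc d))) *\<^sub>R (\<Sum>i=1..mm (Suc d). e i))
           \<le> 4 * modulus e (mm (Suc d)) F (1 / real d) + 4 * (\<rho> * real d powr (1/q - inv_ereal_exp p))
             + 2 * (psi e (mm d) / psi e (mm (Suc d)))"
proof -
  have "F stair l = F stair (mm (Suc d))" if l: "l \<in> {mm d<..mm (Suc d)}" for l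
  proof -
    have "stair l = stair (mm (Suc d))"
      using stair_on_block[of d] l last_block by simp
    moreover have "l \<in> {1..mm (Suc d)}" "mm (Suc d) \<in> {1..mm (Suc d)}"
      using l one_le_top by auto
    ultimately show ?thesis
      using step stair_in_sphere unfolding step_preserving_def by blast
  qed
  moreover have "psi e (mm (Suc d)) > 0"
    using psi_ge_one[OF normalized unc one_le_top] by simp
  moreover have "F stair \<in> pos_sphere_X e (mm (Suc d))"
    using F stair_in_sphere by blast
  moreover note step_map_head_bound[OF unc low up q F step half growth \<open>\<rho> > 0\<close>]
  ultimately have "norm (vec e (mm (Suc d)) (F stair) - (1 / psi e (mm (Suc d))) *\<^sub>R (\<Sum>i=1..mm (Suc d). e i))
      \<le> 2 * (2 * (modulus e (mm (Suc d)) F (1 / real d) + \<rho> * real d powr (1/q - inv_ereal_exp p)))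
        + 2 * (psi e (mm d) / psi e (mm (Suc d)))"
    by (intro constant_tail_estimate[OF unc _ last_block])
  then show ?thesis
    by simp
qed

end

lemma staircase_from_subsequence:
  fixes kk m :: "nat \<Rightarrow> nat"
  assumes kk: "strict_mono kk" and "1 \<le> d"
    and m_kk: "\<forall>s\<in>{1..d}. \<exists>j\<ge>1. m s = kk (2 * j)" and m_less: "\<forall>s\<in>{1..<d}. m s < m (Suc s)"
    and k_kk: "\<exists>j\<ge>1. k = kk (2 * j)" and "m d < k"
    and mm: "mm = (\<lambda>s. if s = 0 then 0 else if s \<le> d then m s else k)"
  shows "staircase mm d"
    and "\<And>s. s \<in> {1..d} \<Longrightarrow> \<exists>i j. 1 \<le> i \<and> i < j \<and> mm s = kk i \<and> mm (Suc s) = kk j"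
proof -
  have mm_kk: "\<exists>j\<ge>1. mm s = kk (2 * j)" if "s \<in> {1..Suc d}" for s
    using that m_kk k_kk by (cases "s \<le> d") (auto simp: mm)
  have "0 < mm 1"
  proof -
    obtain j where "1 \<le> j" "mm 1 = kk (2 * j)"
      using mm_kk[of 1] \<open>1 \<le> d\<close> by auto
    then show ?thesis
      using strict_mono_imp_increasing[OF kk, of "2 * j"] by simp
  qed
  have mm_less: "mm s < mm (Suc s)" if "s \<le> d" for s
    using that \<open>0 < mm 1\<close> m_less \<open>m d < k\<close> by (cases "s = 0"; cases "s = d") (auto simp: mm)
  show "staircase mm d"
  proof
    have "mm n \<le> mm (Suc n)" for n
      using less_imp_le[OF mm_less[of n]] by (cases "n \<le> d") (simp_all add: mm)
    then show "mono mm"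
      by (simp add: mono_iff_le_Suc)
  qed (use \<open>0 < mm 1\<close> \<open>1 \<le> d\<close> in \<open>simp_all add: mm\<close>)
  fix s
  assume s: "s \<in> {1..d}"
  then obtain i j where "1 \<le> i" "mm s = kk (2 * i)" "mm (Suc s) = kk (2 * j)"
    using mm_kk[of s] mm_kk[of "Suc s"] by auto
  moreover have "2 * i < 2 * j"
    using mm_less[of s] s calculation kk by (simp add: strict_mono_less)
  ultimately show "\<exists>i j. 1 \<le> i \<and> i < j \<and> mm s = kk i \<and> mm (Suc s) = kk j"
    by (intro exI[of _ "2 * i"] exI[of _ "2 * j"]) simp
qed

lemma assumptionA_psi_growth:
  assumes "one_unconditional e" and "strict_mono kk" and A: "assumptionA e p q d eps P kk"
    and "eps > 0" and "1 \<le> i" and "i < j"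
  shows "psi e (kk j) \<ge> (8 * real d powr (1/q - inv_ereal_exp p) / eps + 2) * psi e (kk i) + 1"
  using A \<open>eps > 0\<close>
  by (intro psi_growth_strict_mono[OF assms(1,2) _ _ assms(5,6)]) (auto simp: assumptionA_def)

theorem theorem6p1:
  fixes e :: "nat \<Rightarrow> 'a::banach" and p :: ereal and q :: real
    and d :: nat and eps :: real and P :: "nat set" and kk :: "nat \<Rightarrow> nat"
    and m :: "nat \<Rightarrow> nat" and k :: nat
    and F :: "(nat \<Rightarrow> real) \<Rightarrow> (nat \<Rightarrow> real)"
  assumes "schauder_basis e" and "normalized_basis e" and "one_unconditional e"
    and "\<not> equiv_c0_basis e"
    and "1 \<le> q" and "ereal q \<le> p"
    and "lower_estimate e p" and "upper_estimate e q"
    and "d \<ge> 1" and "0 < eps" and "eps \<le> 1"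
    and "strict_mono kk"
    and "assumptionA e p q d (eps / 4) P kk"
    and "\<forall>s\<in>{1..d}. \<exists>j\<ge>1. m s = kk (2 * j)"
    and "\<forall>s\<in>{1..<d}. m s < m (Suc s)"
    and "\<exists>j\<ge>1. k = kk (2 * j)" and "k > m d"
    and "F ` pos_sphere_linf k \<subseteq> pos_sphere_X e k"
    and "step_preserving k F"
    and "modulus e k F (1 / real d) \<le> eps / 8"
  shows "norm (vec e k (F (zvec d m)) - (1 / psi e k) *\<^sub>R (\<Sum>i=1..k. e i)) \<le> eps"
proof -
  define D where "D = real d powr (1/q - inv_ereal_exp p)"
  define \<rho> where "\<rho> = eps / (16 * D)"
  define mm where "mm = (\<lambda>s. if s = 0 then 0 else if s \<le> d then m s else k)"
  note partition = staircase_from_subsequence[OF assms(12,9,14,15,16,17) mm_def]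
  interpret staircase mm d
    by (rule partition(1))
  have "D \<ge> 1"
    using assms(9) inv_ereal_exp_le[OF assms(5,6)] by (simp add: D_def ge_one_powr_ge_zero)
  then have "\<rho> > 0" and "\<rho> * D = eps / 16" and "2 / \<rho> \<ge> 32 / eps"
    and C: "8 * D / (eps / 4) + 2 = 2 / \<rho> + 2"
    using assms(10) by (auto simp: \<rho>_def field_simps)
  have growth: "psi e (mm (Suc s)) \<ge> (2 / \<rho> + 2) * psi e (mm s) + 1" if "s \<in> {1..d}" for s
    using partition(2)[OF that] assumptionA_psi_growth[OF assms(3,12,13)] C assms(10)
    by (auto simp: D_def)
  have top: "mm (Suc d) = k" "mm d = m d"
    using assms(9) by (simp_all add: mm_def)
  have "(32 / eps) * psi e (m d) \<le> psi e k"
    using growth[of d] assms(9) top \<open>2 / \<rho> \<ge> 32 / eps\<close>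
      mult_right_mono[of "32 / eps" "2 / \<rho> + 2" "psi e (m d)"] by (simp add: psi_def)
  then have ratio: "psi e (m d) / psi e k \<le> eps / 32"
    using psi_ge_one[OF assms(2,3), of k] assms(10,17) by (simp add: field_simps)
  have "norm (vec e k (F stair) - (1 / psi e k) *\<^sub>R (\<Sum>i=1..k. e i))
      \<le> 4 * modulus e k F (1 / real d) + 4 * (\<rho> * D) + 2 * (psi e (m d) / psi e k)"
    using stair_image_estimate[OF assms(3,2,7,8,5,6) _ _ _ growth \<open>\<rho> > 0\<close>, of F P] assms(13,17,18,19)
    unfolding top D_def assumptionA_def by blast
  moreover have "zvec d m = stair"
    by (rule zvec_eq_stair) (simp add: mm_def)
  ultimately show ?thesis
    using ratio assms(10,20) \<open>\<rho> * D = eps / 16\<close> by (simp only:)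
qed

end
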